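(* Consider $N$ agents communicating over an undirected connected graph with weight matrix $W=[w_{ij}]\in\mathbb{R}^{N\times N}$ as described in the context, and run the DOGD-GT algorithm with constant step size $\eta>0$ on random losses $f_{t,i}$, $t=1,\dots,T$, $i=1,\dots,N$. Suppose Assumption 1 holds: each $f_{t,i}$ is convex and $L$-smooth, and there is a constant $D$ with $\mathbb{E}[\|\nabla f_{t,i}(x)\|^2]\le D$ for all $x$. Then \[ \mathbb{E}\Big[\sum_{i=1}^N\sum_{t=1}^T f_{t,i}(x_{t,i})-\sum_{i=1}^N\sum_{t=1}^T f_{t,i}(\bar{x}_t)\Big]\le 2L\sum_{t=1}^T\mathbb{E}\big[\|x_t-\mathbf{1}\bar{x}_t\|^2\big]. \]
   Context: Graph and weights: agents $\{1,\dots,N\}$ communicate over an undirected connected graph; $W=[w_{ij}]$ is doubly stochastic, with $w_{ij}>0$ if $(i,j)$ is an edge, $w_{ii}>0$, and $w_{ij}=0$ otherwise. Losses: the loss functions $f_{t,i}:\mathbb{R}^d\to\mathbb{R}$ are random, drawn from a common unknown distribution $\mathcal{P}$. DOGD-GT algorithm with step size $\eta$: set $x_{1,i}=0$ and $s_{1,i}=\nabla f_{1,i}(x_{1,i})$. For $t\ge 2$ set \[ s_{t,i}=\sum_j w_{ij}s_{t-1,j}+\nabla f_{t,i}(x_{t,i})-\nabla f_{t-1,i}(x_{t-1,i}), \] and for all $t$ set \[ x_{t+1,i}=\sum_j w_{ij}x_{t,j}-\eta s_{t,i}. \] At iteration $t$, agent $i$ incurs loss $f_{t,i}(x_{t,i})$.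 Notation: $\bar{x}_t=\frac1N\sum_i x_{t,i}$; $x_t$ is the stacked vector $(x_{t,1},\dots,x_{t,N})$; $\|x_t-\mathbf{1}\bar{x}_t\|^2=\sum_{i=1}^N\|x_{t,i}-\bar{x}_t\|^2$. *)

theory Defs
  imports "HOL-Probability.Probability"
begin

text \<open>Agents are indexed by 0,...,N-1; iterations by t = 1,2,...
  The state at iteration t (for t >= 1) is stored at index t - 1.
  G t i y is the gradient of f_{t,i} at the point y.\<close>

primrec dogd_state ::
  "nat \<Rightarrow> (nat \<Rightarrow> nat \<Rightarrow> real) \<Rightarrow> real \<Rightarrow> (nat \<Rightarrow> nat \<Rightarrow> 'a::real_vector \<Rightarrow> 'a)
   \<Rightarrow> nat \<Rightarrow> (nat \<Rightarrow> 'a) \<times> (nat \<Rightarrow> 'a)" where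
  "dogd_state N W eta G 0 = ((\<lambda>i. 0), (\<lambda>i. G 1 i 0))"
| "dogd_state N W eta G (Suc k) =
     (let x = fst (dogd_state N W eta G k);
          s = snd (dogd_state N W eta G k);
          x' = (\<lambda>i. (\<Sum>j<N. W i j *\<^sub>R x j) - eta *\<^sub>R s i);
          s' = (\<lambda>i. (\<Sum>j<N. W i j *\<^sub>R s j) + G (Suc (Suc k)) i (x' i) - G (Suc k) i (x i))
      in (x', s'))"

definition dogd_x ::
  "nat \<Rightarrow> (nat \<Rightarrow> nat \<Rightarrow> real) \<Rightarrow> real \<Rightarrow> (nat \<Rightarrow> nat \<Rightarrow> 'a::real_vector \<Rightarrow> 'a)
   \<Rightarrow> nat \<Rightarrow> nat \<Rightarrow> 'a" where
  "dogd_x N W eta G t i = fst (dogd_state N W eta G (t - 1)) i"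

definition dogd_xbar ::
  "nat \<Rightarrow> (nat \<Rightarrow> nat \<Rightarrow> real) \<Rightarrow> real \<Rightarrow> (nat \<Rightarrow> nat \<Rightarrow> 'a::real_vector \<Rightarrow> 'a)
   \<Rightarrow> nat \<Rightarrow> 'a" where
  "dogd_xbar N W eta G t = (1 / real N) *\<^sub>R (\<Sum>i<N. dogd_x N W eta G t i)"

end

(* Convexity and L-smoothness give, for every sample, the pointwise bound
     f(x_i) - f(xbar) <= L |x_i - xbar|^2 + <grad f(xbar), x_i - xbar>.
   The iterates of round t are measurable functions of the samples of earlier rounds, which are
   independent of the round-t samples.  Integrating out the round-t sample first (the freezing
   lemma) replaces grad f_{t,i}(xbar_t) by the mean gradient grad F(xbar_t), the same for every
   agent, so the cross terms vanish since the deviations x_{t,i} - xbar_t sum to zero.  The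
   second-moment bound and the Lipschitz gradients make every iterate square integrable, so all
   these expectations are finite.  Neither the graph, nor W, nor eta plays any role. *)

theory Submission
  imports Defs
begin

lemma dogd_state_cong:
  assumes "\<And>t. t \<le> Suc k \<Longrightarrow> G t = G' t"
  shows "dogd_state N W eta G k = dogd_state N W eta G' k"
  using assms by (induction k) (simp_all add: Let_def)

lemma dogd_x_cong:
  assumes "\<And>\<tau>. \<tau> < t \<Longrightarrow> G \<tau> = G' \<tau>"
  shows "dogd_x N W eta G t i = dogd_x N W eta G' t i"
proof (cases "t \<le> 1")
  case True
  then show ?thesis by (simp add: dogd_x_def)
next
  case False
  define k where "k = t - 2"
  have t: "t = Suc (Suc k)"
    using False by (simp add: k_def)
  have "dogd_state N W eta G k = dogd_state N W eta G' k"
    by (rule dogd_state_cong) (use assms t in auto)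
  moreover have "G (Suc k) = G' (Suc k)"
    using assms t by simp
  ultimately show ?thesis
    by (simp add: dogd_x_def t Let_def)
qed

lemma dogd_xbar_cong:
  assumes "\<And>\<tau>. \<tau> < t \<Longrightarrow> G \<tau> = G' \<tau>"
  shows "dogd_xbar N W eta G t = dogd_xbar N W eta G' t"
  unfolding dogd_xbar_def using dogd_x_cong[OF assms] by simp

lemma sum_dogd_x_minus_xbar:
  "(\<Sum>i<N. dogd_x N W eta G t i - dogd_xbar N W eta G t) = 0"
  by (cases "N = 0") (simp_all add: dogd_xbar_def sum_subtractf sum_constant_scaleR)

lemma dogd_state_closed:
  assumes zero: "Q (\<lambda>_. 0)"
    and add: "\<And>f h. Q f \<Longrightarrow> Q h \<Longrightarrow> Q (\<lambda>a. f a + h a)"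
    and scaleR: "\<And>c f. Q f \<Longrightarrow> Q (\<lambda>a. c *\<^sub>R f a)"
    and grad: "\<And>t i f. Q f \<Longrightarrow> Q (\<lambda>a. G a t i (f a))"
  shows "Q (\<lambda>a. fst (dogd_state N W eta (G a) k) i) \<and> Q (\<lambda>a. snd (dogd_state N W eta (G a) k) i)"
proof -
  have diff: "Q (\<lambda>a. f a - h a)" if "Q f" "Q h" for f h
    using add[OF that(1) scaleR[OF that(2), of "-1"]] by simp
  have sum: "Q (\<lambda>a. \<Sum>j<n. f j a)" if "\<And>j. Q (f j)" for f :: "nat \<Rightarrow> _" and n
    by (induction n) (simp_all add: zero add that)
  show ?thesis
  proof (induction k arbitrary: i)
    case 0
    show ?case using zero grad[OF zero] by simp
  next
    case (Suc k)
    let ?x = "\<lambda>a. fst (dogd_state N W eta (G a) k)"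
    let ?s = "\<lambda>a. snd (dogd_state N W eta (G a) k)"
    have x: "Q (\<lambda>a. ?x a j)" and s: "Q (\<lambda>a. ?s a j)" for j
      using Suc by auto
    have x': "Q (\<lambda>a. (\<Sum>j<N. W i j *\<^sub>R ?x a j) - eta *\<^sub>R ?s a i)" for i
      by (intro diff sum scaleR x s)
    show ?case
      by (simp add: Let_def) (intro conjI x' diff add sum scaleR s grad x)
  qed
qed

lemma dogd_x_closed:
  assumes "Q (\<lambda>_. 0)"
    and "\<And>f h. Q f \<Longrightarrow> Q h \<Longrightarrow> Q (\<lambda>a. f a + h a)"
    and "\<And>c f. Q f \<Longrightarrow> Q (\<lambda>a. c *\<^sub>R f a)"
    and "\<And>t i f. Q f \<Longrightarrow> Q (\<lambda>a. G a t i (f a))"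
  shows "Q (\<lambda>a. dogd_x N W eta (G a) t i)"
  unfolding dogd_x_def using dogd_state_closed[of Q G, OF assms] by blast

lemma dogd_xbar_closed:
  assumes zero: "Q (\<lambda>_. 0)"
    and add: "\<And>f h. Q f \<Longrightarrow> Q h \<Longrightarrow> Q (\<lambda>a. f a + h a)"
    and scaleR: "\<And>c f. Q f \<Longrightarrow> Q (\<lambda>a. c *\<^sub>R f a)"
    and "\<And>t i f. Q f \<Longrightarrow> Q (\<lambda>a. G a t i (f a))"
  shows "Q (\<lambda>a. dogd_xbar N W eta (G a) t)"
proof -
  have "Q (\<lambda>a. \<Sum>i<n. dogd_x N W eta (G a) t i)" for n
    by (induction n) (simp_all add: zero add dogd_x_closed[of Q, OF assms])
  then show ?thesis
    unfolding dogd_xbar_def by (rule scaleR)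
qed

lemma convex_on_has_derivative_imp_above_tangent:
  fixes f :: "'a::real_normed_vector \<Rightarrow> real"
  assumes convex: "convex_on UNIV f" and deriv: "(f has_derivative f') (at x)"
  shows "f' (y - x) \<le> f y - f x"
proof -
  define \<phi> where "\<phi> u = f (x + u *\<^sub>R (y - x))" for u :: real
  have "convex_on UNIV \<phi>"
  proof (rule convex_onI)
    fix t u v :: real
    have "x + ((1 - t) *\<^sub>R u + t *\<^sub>R v) *\<^sub>R (y - x)
        = (1 - t) *\<^sub>R (x + u *\<^sub>R (y - x)) + t *\<^sub>R (x + v *\<^sub>R (y - x))"
      by (simp add: algebra_simps)
    moreover assume "0 < t" "t < 1"
    ultimately show "\<phi> ((1 - t) *\<^sub>R u + t *\<^sub>R v) \<le> (1 - t) * \<phi> u + t * \<phi> v"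
      unfolding \<phi>_def using convex_onD[OF convex, of t] by simp
  qed simp
  moreover have "(\<phi> has_field_derivative f' (y - x)) (at 0 within UNIV)"
  proof -
    have "((\<lambda>u. x + u *\<^sub>R (y - x)) has_derivative (\<lambda>u. u *\<^sub>R (y - x))) (at 0)"
      by (auto intro!: derivative_eq_intros)
    moreover have "(f has_derivative f') (at (x + 0 *\<^sub>R (y - x)))"
      using deriv by simp
    ultimately have "(\<phi> has_derivative (\<lambda>u. f' (u *\<^sub>R (y - x)))) (at 0)"
      unfolding \<phi>_def by (rule has_derivative_compose)
    moreover have "f' (u *\<^sub>R (y - x)) = f' (y - x) * u" for u
      using linear_scale[OF has_derivative_linear[OF deriv]] by simp
    ultimately show ?thesis
      by (simp add: has_field_derivative_def)
  qed
  ultimately have "f' (y - x) * (1 - 0) \<le> \<phi> 1 - \<phi> 0"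
    by (intro convex_on_imp_above_tangent) auto
  then show ?thesis
    by (simp add: \<phi>_def)
qed

lemma convex_smooth_diff_le:
  fixes f :: "'a::real_inner \<Rightarrow> real"
  assumes convex: "convex_on UNIV f"
    and deriv: "(f has_derivative (\<lambda>h. g x \<bullet> h)) (at x)"
    and smooth: "norm (g x - g y) \<le> L * norm (x - y)"
  shows "f x - f y \<le> L * (norm (x - y))\<^sup>2 + g y \<bullet> (x - y)"
proof -
  have "f x - f y \<le> g x \<bullet> (x - y)"
    using convex_on_has_derivative_imp_above_tangent[OF convex deriv, of y]
    by (simp add: inner_diff_right)
  also have "\<dots> = (g x - g y) \<bullet> (x - y) + g y \<bullet> (x - y)"
    by (simp add: inner_diff_left)
  also have "(g x - g y) \<bullet> (x - y) \<le> norm (g x - g y) * norm (x - y)"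
    by (rule norm_cauchy_schwarz)
  also have "\<dots> \<le> L * norm (x - y) * norm (x - y)"
    by (rule mult_right_mono[OF smooth]) simp
  finally show ?thesis
    by (simp add: power2_eq_square mult.assoc)
qed

lemma sum_convex_smooth_diff_le:
  fixes f :: "'t \<Rightarrow> 'i \<Rightarrow> 'a::real_inner \<Rightarrow> real"
  assumes convex: "\<And>t i. convex_on UNIV (f t i)"
    and deriv: "\<And>t i. (f t i has_derivative (\<lambda>h. g t i (x t i) \<bullet> h)) (at (x t i))"
    and smooth: "\<And>t i. norm (g t i (x t i) - g t i (y t)) \<le> L * norm (x t i - y t)"
  shows "(\<Sum>i\<in>I. \<Sum>t\<in>T. f t i (x t i)) - (\<Sum>i\<in>I. \<Sum>t\<in>T. f t i (y t))
    \<le> (\<Sum>t\<in>T. L * (\<Sum>i\<in>I. (norm (x t i - y t))\<^sup>2) + (\<Sum>i\<in>I. g t i (y t) \<bullet> (x t i - y t)))"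
  unfolding sum_subtractf[symmetric] sum_distrib_left sum.distrib[symmetric]
  by (subst sum.swap) (intro sum_mono convex_smooth_diff_le convex deriv smooth)

definition square_integrable ::
    "'w measure \<Rightarrow> ('w \<Rightarrow> 'b::{real_normed_vector, second_countable_topology}) \<Rightarrow> bool" where
  "square_integrable M f \<longleftrightarrow> f \<in> borel_measurable M \<and> integrable M (\<lambda>\<omega>. (norm (f \<omega>))\<^sup>2)"

lemma square_integrable_zero: "square_integrable M (\<lambda>_. 0)"
  by (simp add: square_integrable_def)

lemma square_integrable_scaleR:
  "square_integrable M f \<Longrightarrow> square_integrable M (\<lambda>\<omega>. c *\<^sub>R f \<omega>)"
  by (simp add: square_integrable_def power_mult_distrib borel_measurable_scaleR)

lemma square_integrable_norm:
  "square_integrable M f \<Longrightarrow> square_integrable M (\<lambda>\<omega>. norm (f \<omega>))"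
  unfolding square_integrable_def by (simp add: measurable_compose[OF _ borel_measurable_norm])

lemma square_integrable_bound:
  assumes "square_integrable M f" and "h \<in> borel_measurable M"
    and "\<And>\<omega>. \<omega> \<in> space M \<Longrightarrow> norm (h \<omega>) \<le> norm (f \<omega>)"
  shows "square_integrable M h"
  unfolding square_integrable_def
proof
  have [measurable]: "h \<in> borel_measurable M"
    by fact
  show "integrable M (\<lambda>\<omega>. (norm (h \<omega>))\<^sup>2)"
  proof (rule Bochner_Integration.integrable_bound)
    show "integrable M (\<lambda>\<omega>. (norm (f \<omega>))\<^sup>2)"
      using assms(1) by (simp add: square_integrable_def)
    show "AE \<omega> in M. norm ((norm (h \<omega>))\<^sup>2) \<le> norm ((norm (f \<omega>))\<^sup>2)"
      using assms(3) by (simp add: AE_I2 power_mono)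
  qed measurable
qed fact

lemma square_integrable_add:
  assumes f: "square_integrable M f" and h: "square_integrable M h"
  shows "square_integrable M (\<lambda>\<omega>. f \<omega> + h \<omega>)"
  unfolding square_integrable_def
proof
  have [measurable]: "f \<in> borel_measurable M" "h \<in> borel_measurable M"
    using f h by (simp_all add: square_integrable_def)
  show "(\<lambda>\<omega>. f \<omega> + h \<omega>) \<in> borel_measurable M"
    by measurable
  have sq: "(norm (a + b))\<^sup>2 \<le> 2 * (norm a)\<^sup>2 + 2 * (norm b)\<^sup>2" for a b :: 'b
  proof -
    have "(norm (a + b))\<^sup>2 \<le> (norm a + norm b)\<^sup>2"
      by (simp add: norm_triangle_ineq power_mono)
    also have "\<dots> \<le> 2 * (norm a)\<^sup>2 + 2 * (norm b)\<^sup>2"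
      using sum_squares_bound[of "norm a" "norm b"] by (simp add: power2_sum)
    finally show ?thesis .
  qed
  show "integrable M (\<lambda>\<omega>. (norm (f \<omega> + h \<omega>))\<^sup>2)"
  proof (rule Bochner_Integration.integrable_bound)
    show "integrable M (\<lambda>\<omega>. 2 * (norm (f \<omega>))\<^sup>2 + 2 * (norm (h \<omega>))\<^sup>2)"
      using f h by (simp add: square_integrable_def)
    show "AE \<omega> in M. norm ((norm (f \<omega> + h \<omega>))\<^sup>2) \<le> norm (2 * (norm (f \<omega>))\<^sup>2 + 2 * (norm (h \<omega>))\<^sup>2)"
      using sq by (simp add: AE_I2)
  qed measurable
qed

lemma square_integrable_diff:
  "square_integrable M f \<Longrightarrow> square_integrable M h \<Longrightarrow> square_integrable M (\<lambda>\<omega>. f \<omega> - h \<omega>)"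
  using square_integrable_add[of M f "\<lambda>\<omega>. (-1) *\<^sub>R h \<omega>"] square_integrable_scaleR[of M h "-1"]
  by simp

lemma integrable_inner_square_integrable:
  fixes f h :: "'w \<Rightarrow> 'b::{real_inner, second_countable_topology}"
  assumes f: "square_integrable M f" and h: "square_integrable M h"
  shows "integrable M (\<lambda>\<omega>. f \<omega> \<bullet> h \<omega>)"
proof (rule Bochner_Integration.integrable_bound)
  have [measurable]: "f \<in> borel_measurable M" "h \<in> borel_measurable M"
    using f h by (simp_all add: square_integrable_def)
  show "(\<lambda>\<omega>. f \<omega> \<bullet> h \<omega>) \<in> borel_measurable M"
    by measurable
  show "integrable M (\<lambda>\<omega>. (norm (f \<omega>))\<^sup>2 + (norm (h \<omega>))\<^sup>2)"
    using f h by (simp add: square_integrable_def)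
  have "\<bar>a \<bullet> b\<bar> \<le> (norm a)\<^sup>2 + (norm b)\<^sup>2" for a b :: 'b
  proof -
    have "\<bar>a \<bullet> b\<bar> \<le> norm a * norm b"
      by (rule Cauchy_Schwarz_ineq2)
    also have "\<dots> \<le> (norm a)\<^sup>2 + (norm b)\<^sup>2"
      using sum_squares_bound[of "norm a" "norm b"] mult_nonneg_nonneg[OF norm_ge_zero norm_ge_zero, of a b]
      by linarith
    finally show ?thesis .
  qed
  then show "AE \<omega> in M. norm (f \<omega> \<bullet> h \<omega>) \<le> norm ((norm (f \<omega>))\<^sup>2 + (norm (h \<omega>))\<^sup>2)"
    by (simp add: AE_I2)
qed

lemma square_integrable_distr:
  assumes "Y \<in> measurable M N" and "square_integrable (distr M N Y) f"
  shows "square_integrable M (\<lambda>\<omega>. f (Y \<omega>))"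
proof -
  have [measurable]: "Y \<in> measurable M N" "f \<in> borel_measurable N"
    using assms by (simp_all add: square_integrable_def)
  then show ?thesis
    using assms(2) by (simp add: square_integrable_def integrable_distr_eq)
qed

lemma (in prob_space) integral_indep_var_freezing:
  fixes h :: "'b \<times> 'b \<Rightarrow> 'd::{banach, second_countable_topology}"
  assumes indep: "indep_var B V C Y"
    and h: "h \<in> borel_measurable (B \<Otimes>\<^sub>M C)"
    and int: "integrable M (\<lambda>\<omega>. h (V \<omega>, Y \<omega>))"
  shows "integrable M (\<lambda>\<omega>. \<integral>y. h (V \<omega>, y) \<partial>distr M C Y)"
    and "(\<integral>\<omega>. h (V \<omega>, Y \<omega>) \<partial>M) = (\<integral>\<omega>. (\<integral>y. h (V \<omega>, y) \<partial>distr M C Y) \<partial>M)"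
proof -
  have V[measurable]: "V \<in> measurable M B" and Y[measurable]: "Y \<in> measurable M C"
    using indep by (auto dest: indep_var_rv1 indep_var_rv2)
  interpret VY: pair_sigma_finite "distr M B V" "distr M C Y"
    by (intro pair_sigma_finite.intro prob_space_imp_sigma_finite prob_space_distr V Y)
  have joint: "distr M B V \<Otimes>\<^sub>M distr M C Y = distr M (B \<Otimes>\<^sub>M C) (\<lambda>\<omega>. (V \<omega>, Y \<omega>))"
    using indep by (simp add: indep_var_distribution_eq)
  have int_pair: "integrable (distr M B V \<Otimes>\<^sub>M distr M C Y) h"
    unfolding joint using int by (subst integrable_distr_eq) (use h in auto)
  have [measurable]: "(\<lambda>v. \<integral>y. h (v, y) \<partial>distr M C Y) \<in> borel_measurable B"
    using VY.M2.borel_measurable_lebesgue_integral[of "\<lambda>v y. h (v, y)" B] h by simp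
  show "integrable M (\<lambda>\<omega>. \<integral>y. h (V \<omega>, y) \<partial>distr M C Y)"
    using VY.integrable_fst'[OF int_pair] by (subst (asm) integrable_distr_eq) auto
  have "(\<integral>\<omega>. h (V \<omega>, Y \<omega>) \<partial>M) = integral\<^sup>L (distr M B V \<Otimes>\<^sub>M distr M C Y) h"
    unfolding joint using h by (subst integral_distr) auto
  also have "\<dots> = (\<integral>v. (\<integral>y. h (v, y) \<partial>distr M C Y) \<partial>distr M B V)"
    by (rule VY.integral_fst'[OF int_pair, symmetric])
  also have "\<dots> = (\<integral>\<omega>. (\<integral>y. h (V \<omega>, y) \<partial>distr M C Y) \<partial>M)"
    by (subst integral_distr) auto
  finally show "(\<integral>\<omega>. h (V \<omega>, Y \<omega>) \<partial>M) = (\<integral>\<omega>. (\<integral>y. h (V \<omega>, y) \<partial>distr M C Y) \<partial>M)" .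
qed

(* indep_var requires both variables to have the same type, so X k enters through the
   restriction of the family to {k}. *)
lemma (in prob_space) integral_indep_vars_freezing:
  fixes h :: "('i \<Rightarrow> 's) \<times> 's \<Rightarrow> 'd::{banach, second_countable_topology}"
  assumes indep: "indep_vars (\<lambda>_. S) X I" and J: "J \<subseteq> I" and k: "k \<in> I" "k \<notin> J"
    and h: "h \<in> borel_measurable (PiM J (\<lambda>_. S) \<Otimes>\<^sub>M S)"
    and int: "integrable M (\<lambda>\<omega>. h (restrict (\<lambda>j. X j \<omega>) J, X k \<omega>))"
  shows "integrable M (\<lambda>\<omega>. \<integral>s. h (restrict (\<lambda>j. X j \<omega>) J, s) \<partial>distr M S (X k))"
    and "(\<integral>\<omega>. h (restrict (\<lambda>j. X j \<omega>) J, X k \<omega>) \<partial>M)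
       = (\<integral>\<omega>. (\<integral>s. h (restrict (\<lambda>j. X j \<omega>) J, s) \<partial>distr M S (X k)) \<partial>M)"
proof -
  define V where "V \<omega> = restrict (\<lambda>j. X j \<omega>) J" for \<omega>
  define Y where "Y \<omega> = restrict (\<lambda>j. X j \<omega>) {k}" for \<omega>
  have indep_VY: "indep_var (PiM J (\<lambda>_. S)) V (PiM {k} (\<lambda>_. S)) Y"
    unfolding V_def Y_def by (rule indep_var_restrict[OF indep]) (use J k in auto)
  have X[measurable]: "X k \<in> measurable M S"
    using indep k by (simp add: indep_vars_def)
  have Y[measurable]: "Y \<in> measurable M (PiM {k} (\<lambda>_. S))"
    using indep_VY by (rule indep_var_rv2)
  define h' where "h' p = h (fst p, snd p k)" for p
  have h'[measurable]: "h' \<in> borel_measurable (PiM J (\<lambda>_. S) \<Otimes>\<^sub>M PiM {k} (\<lambda>_. S))"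
    unfolding h'_def using h by measurable
  have h'_VY: "h' (V \<omega>, Y \<omega>) = h (V \<omega>, X k \<omega>)" for \<omega>
    by (simp add: h'_def Y_def)
  have inner: "(\<integral>y. h' (v, y) \<partial>distr M (PiM {k} (\<lambda>_. S)) Y) = (\<integral>s. h (v, s) \<partial>distr M S (X k))"
    if "v \<in> space (PiM J (\<lambda>_. S))" for v
  proof -
    have [measurable]: "(\<lambda>s. h (v, s)) \<in> borel_measurable S"
      using that h by measurable
    have "(\<integral>y. h' (v, y) \<partial>distr M (PiM {k} (\<lambda>_. S)) Y) = (\<integral>\<omega>. h (v, X k \<omega>) \<partial>M)"
      by (subst integral_distr) (auto simp: h'_def Y_def)
    also have "\<dots> = (\<integral>s. h (v, s) \<partial>distr M S (X k))"
      by (subst integral_distr) auto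
    finally show ?thesis .
  qed
  have inner_V: "(\<integral>y. h' (V \<omega>, y) \<partial>distr M (PiM {k} (\<lambda>_. S)) Y) = (\<integral>s. h (V \<omega>, s) \<partial>distr M S (X k))"
    if "\<omega> \<in> space M" for \<omega>
    using inner measurable_space[OF indep_var_rv1[OF indep_VY] that] .
  have int_VY: "integrable M (\<lambda>\<omega>. h' (V \<omega>, Y \<omega>))"
    unfolding h'_VY using int by (simp add: V_def)
  have "integrable M (\<lambda>\<omega>. \<integral>s. h (V \<omega>, s) \<partial>distr M S (X k))"
    using integral_indep_var_freezing(1)[OF indep_VY h' int_VY]
    by (simp add: inner_V cong: Bochner_Integration.integrable_cong)
  then show "integrable M (\<lambda>\<omega>. \<integral>s. h (restrict (\<lambda>j. X j \<omega>) J, s) \<partial>distr M S (X k))"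
    by (simp add: V_def)
  have "(\<integral>\<omega>. h (V \<omega>, X k \<omega>) \<partial>M) = (\<integral>\<omega>. (\<integral>s. h (V \<omega>, s) \<partial>distr M S (X k)) \<partial>M)"
    using integral_indep_var_freezing(2)[OF indep_VY h' int_VY]
    by (simp add: h'_VY inner_V cong: Bochner_Integration.integral_cong)
  then show "(\<integral>\<omega>. h (restrict (\<lambda>j. X j \<omega>) J, X k \<omega>) \<partial>M)
       = (\<integral>\<omega>. (\<integral>s. h (restrict (\<lambda>j. X j \<omega>) J, s) \<partial>distr M S (X k)) \<partial>M)"
    by (simp add: V_def)
qed

(* A non-integrable f has integral 0 by convention, hence the hypothesis on the integral of u. *)
lemma integral_le_integral_upper_bound:
  fixes f u :: "'w \<Rightarrow> real"
  assumes "integrable M u" and "\<And>\<omega>. \<omega> \<in> space M \<Longrightarrow> f \<omega> \<le> u \<omega>" and "0 \<le> integral\<^sup>L M u"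
  shows "integral\<^sup>L M f \<le> integral\<^sup>L M u"
proof (cases "integrable M f")
  case True
  then show ?thesis
    using assms by (intro integral_mono) auto
next
  case False
  then show ?thesis
    using assms(3) by (simp add: not_integrable_integral_eq)
qed

locale stochastic_gradients = prob_space M for M :: "'w measure" +
  fixes S P :: "'s measure"
    and xi :: "nat \<Rightarrow> nat \<Rightarrow> 'w \<Rightarrow> 's"
    and g :: "'s \<Rightarrow> 'a::euclidean_space \<Rightarrow> 'a"
    and L D :: real
  assumes xi_measurable: "\<And>t i. xi t i \<in> measurable M S"
    and xi_indep: "indep_vars (\<lambda>_. S) (\<lambda>(t, i). xi t i) UNIV"
    and xi_distr: "\<And>t i. distr M S (xi t i) = P"
    and g_measurable: "(\<lambda>(s, x). g s x) \<in> measurable (S \<Otimes>\<^sub>M borel) borel"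
    and g_lipschitz: "\<And>s x y. s \<in> space S \<Longrightarrow> norm (g s x - g s y) \<le> L * norm (x - y)"
    and g_second_moment: "\<And>x. (\<integral>\<^sup>+ s. ennreal ((norm (g s x))\<^sup>2) \<partial>P) \<le> ennreal D"
begin

abbreviation grad_oracle :: "'w \<Rightarrow> nat \<Rightarrow> nat \<Rightarrow> 'a \<Rightarrow> 'a" where
  "grad_oracle \<omega> \<equiv> \<lambda>t i. g (xi t i \<omega>)"

definition expected_grad :: "'a \<Rightarrow> 'a" where
  "expected_grad x = (\<integral>s. g s x \<partial>P)"

definition history :: "nat \<Rightarrow> (nat \<times> nat \<Rightarrow> 's) measure" where
  "history t = PiM {p. fst p < t} (\<lambda>_. S)"

definition past :: "nat \<Rightarrow> 'w \<Rightarrow> nat \<times> nat \<Rightarrow> 's" where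
  "past t \<omega> = restrict (\<lambda>(\<tau>, j). xi \<tau> j \<omega>) {p. fst p < t}"

(* The gradients of rounds t and later are never queried by the iterates of round t
   (dogd_x_cong); replacing them by 0 makes those iterates functions of the past alone. *)
definition history_oracle :: "nat \<Rightarrow> (nat \<times> nat \<Rightarrow> 's) \<Rightarrow> nat \<Rightarrow> nat \<Rightarrow> 'a \<Rightarrow> 'a" where
  "history_oracle t v \<tau> j = (if \<tau> < t then g (v (\<tau>, j)) else (\<lambda>_. 0))"

lemma L_nonneg: "0 \<le> L"
proof -
  obtain \<omega> where "\<omega> \<in> space M"
    using not_empty by blast
  then have s: "xi 0 0 \<omega> \<in> space S"
    using measurable_space[OF xi_measurable] by blast
  obtain b :: 'a where "b \<in> Basis"
    using nonempty_Basis by blast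
  then have "0 \<le> L * norm b" and "norm b = 1"
    using order_trans[OF norm_ge_zero g_lipschitz[OF s, of b 0]] by simp_all
  then show ?thesis
    by simp
qed

lemma measurable_grad:
  "u \<in> measurable A S \<Longrightarrow> f \<in> borel_measurable A \<Longrightarrow> (\<lambda>a. g (u a) (f a)) \<in> borel_measurable A"
  using measurable_compose[OF measurable_Pair g_measurable] by simp

lemma square_integrable_grad_at: "square_integrable P (\<lambda>s. g s x)"
  unfolding square_integrable_def
proof
  have "sets P = sets S"
    using xi_distr[of 0 0] by (metis sets_distr)
  then show g_x[measurable]: "(\<lambda>s. g s x) \<in> borel_measurable P"
    unfolding measurable_cong_sets[OF \<open>sets P = sets S\<close> refl]
    using measurable_grad[of "\<lambda>s. s" S "\<lambda>_. x"] by simp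
  show "integrable P (\<lambda>s. (norm (g s x))\<^sup>2)"
  proof (rule integrableI_bounded)
    have "(\<integral>\<^sup>+ s. ennreal (norm ((norm (g s x))\<^sup>2)) \<partial>P) = (\<integral>\<^sup>+ s. ennreal ((norm (g s x))\<^sup>2) \<partial>P)"
      by simp
    also have "\<dots> \<le> ennreal D"
      by (rule g_second_moment)
    also have "\<dots> < \<infinity>"
      by simp
    finally show "(\<integral>\<^sup>+ s. ennreal (norm ((norm (g s x))\<^sup>2)) \<partial>P) < \<infinity>" .
  qed measurable
qed

lemma integrable_grad_at: "integrable P (\<lambda>s. g s x)"
proof -
  interpret P: prob_space P
    using prob_space_distr[OF xi_measurable, of 0 0] by (simp add: xi_distr)
  have g_x[measurable]: "(\<lambda>s. g s x) \<in> borel_measurable P"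
    and sq: "integrable P (\<lambda>s. (norm (g s x))\<^sup>2)"
    using square_integrable_grad_at by (simp_all add: square_integrable_def)
  have "integrable P (\<lambda>s. norm (g s x))"
    by (rule P.square_integrable_imp_integrable) (measurable, simp add: sq)
  then show ?thesis
    using g_x by (rule integrable_norm_cancel)
qed

lemma square_integrable_grad:
  assumes f: "square_integrable M f"
  shows "square_integrable M (\<lambda>\<omega>. g (xi t i \<omega>) (f \<omega>))"
proof (rule square_integrable_bound)
  have "square_integrable M (\<lambda>\<omega>. g (xi t i \<omega>) 0)"
    using square_integrable_distr[OF xi_measurable, of t i, unfolded xi_distr, OF square_integrable_grad_at] .
  then show "square_integrable M (\<lambda>\<omega>. norm (g (xi t i \<omega>) 0) + \<bar>L\<bar> * norm (f \<omega>))"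
    using square_integrable_add[OF square_integrable_norm square_integrable_scaleR[OF square_integrable_norm[OF f]]]
    by simp
  show "(\<lambda>\<omega>. g (xi t i \<omega>) (f \<omega>)) \<in> borel_measurable M"
    using f by (intro measurable_grad xi_measurable) (simp add: square_integrable_def)
  fix \<omega> assume "\<omega> \<in> space M"
  then have "xi t i \<omega> \<in> space S"
    by (rule measurable_space[OF xi_measurable])
  then have "norm (g (xi t i \<omega>) (f \<omega>) - g (xi t i \<omega>) 0) \<le> L * norm (f \<omega> - 0)"
    by (rule g_lipschitz)
  also have "\<dots> \<le> \<bar>L\<bar> * norm (f \<omega>)"
    by (simp add: mult_right_mono)
  finally have "norm (g (xi t i \<omega>) (f \<omega>)) \<le> norm (g (xi t i \<omega>) 0) + \<bar>L\<bar> * norm (f \<omega>)"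
    using norm_triangle_sub[of "g (xi t i \<omega>) (f \<omega>)" "g (xi t i \<omega>) 0"] by simp
  then show "norm (g (xi t i \<omega>) (f \<omega>)) \<le> norm (norm (g (xi t i \<omega>) 0) + \<bar>L\<bar> * norm (f \<omega>))"
    by simp
qed

lemma square_integrable_dogd_x: "square_integrable M (\<lambda>\<omega>. dogd_x N W eta (grad_oracle \<omega>) t i)"
  by (intro dogd_x_closed[where Q = "square_integrable M"] square_integrable_zero square_integrable_add
      square_integrable_scaleR square_integrable_grad)

lemma square_integrable_dogd_xbar: "square_integrable M (\<lambda>\<omega>. dogd_xbar N W eta (grad_oracle \<omega>) t)"
  by (intro dogd_xbar_closed[where Q = "square_integrable M"] square_integrable_zero square_integrable_add
      square_integrable_scaleR square_integrable_grad)

lemma grad_oracle_eq_history_oracle: "\<tau> < t \<Longrightarrow> grad_oracle \<omega> \<tau> = history_oracle t (past t \<omega>) \<tau>"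
  by (auto simp: history_oracle_def past_def)

lemma measurable_history_oracle:
  assumes "f \<in> borel_measurable (history t)"
  shows "(\<lambda>v. history_oracle t v \<tau> j (f v)) \<in> borel_measurable (history t)"
proof (cases "\<tau> < t")
  case True
  then have "(\<lambda>v. v (\<tau>, j)) \<in> measurable (history t) S"
    unfolding history_def by (intro measurable_component_singleton) simp
  then show ?thesis
    using True assms by (simp add: history_oracle_def measurable_grad)
qed (simp add: history_oracle_def)

lemma measurable_dogd_x_history:
  "(\<lambda>v. dogd_x N W eta (history_oracle t v) t i) \<in> borel_measurable (history t)"
  by (intro dogd_x_closed[where Q = "\<lambda>f. f \<in> borel_measurable (history t)"] measurable_history_oracle)
     simp_all

lemma measurable_dogd_xbar_history:
  "(\<lambda>v. dogd_xbar N W eta (history_oracle t v) t) \<in> borel_measurable (history t)"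
  by (intro dogd_xbar_closed[where Q = "\<lambda>f. f \<in> borel_measurable (history t)"] measurable_history_oracle)
     simp_all

lemma integral_grad_inner_past:
  assumes [measurable]: "\<Psi> \<in> borel_measurable (history t)" "\<Phi> \<in> borel_measurable (history t)"
    and "square_integrable M (\<lambda>\<omega>. \<Psi> (past t \<omega>))" "square_integrable M (\<lambda>\<omega>. \<Phi> (past t \<omega>))"
  shows "integrable M (\<lambda>\<omega>. expected_grad (\<Psi> (past t \<omega>)) \<bullet> \<Phi> (past t \<omega>))"
    and "(\<integral>\<omega>. g (xi t i \<omega>) (\<Psi> (past t \<omega>)) \<bullet> \<Phi> (past t \<omega>) \<partial>M)
       = (\<integral>\<omega>. expected_grad (\<Psi> (past t \<omega>)) \<bullet> \<Phi> (past t \<omega>) \<partial>M)"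
proof -
  define h where "h p = g (snd p) (\<Psi> (fst p)) \<bullet> \<Phi> (fst p)" for p
  have past_eq: "past t \<omega> = restrict (\<lambda>p. case_prod xi p \<omega>) {p. fst p < t}" for \<omega>
    by (simp add: past_def case_prod_beta')
  have "h \<in> borel_measurable (history t \<Otimes>\<^sub>M S)"
    unfolding h_def by (intro borel_measurable_inner measurable_grad) measurable
  then have h: "h \<in> borel_measurable (PiM {p. fst p < t} (\<lambda>_. S) \<Otimes>\<^sub>M S)"
    by (simp add: history_def)
  have int: "integrable M (\<lambda>\<omega>. h (past t \<omega>, xi t i \<omega>))"
    unfolding h_def using assms(3,4)
    by (simp add: integrable_inner_square_integrable square_integrable_grad)
  have kJ: "(t, i) \<notin> {p. fst p < t}"
    by simp
  note freezing = integral_indep_vars_freezing[OF xi_indep subset_UNIV UNIV_I kJ h]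
  have inner: "(\<integral>s. g s (\<Psi> v) \<bullet> \<Phi> v \<partial>P) = expected_grad (\<Psi> v) \<bullet> \<Phi> v" for v
    by (simp add: expected_grad_def integrable_grad_at)
  show "integrable M (\<lambda>\<omega>. expected_grad (\<Psi> (past t \<omega>)) \<bullet> \<Phi> (past t \<omega>))"
    using freezing(1) int by (simp add: xi_distr inner h_def flip: past_eq)
  show "(\<integral>\<omega>. g (xi t i \<omega>) (\<Psi> (past t \<omega>)) \<bullet> \<Phi> (past t \<omega>) \<partial>M)
       = (\<integral>\<omega>. expected_grad (\<Psi> (past t \<omega>)) \<bullet> \<Phi> (past t \<omega>) \<partial>M)"
    using freezing(2) int by (simp add: xi_distr inner h_def flip: past_eq)
qed

lemma integrable_sum_sq_consensus_error:
  "integrable M (\<lambda>\<omega>. \<Sum>i<N. (norm (dogd_x N W eta (grad_oracle \<omega>) t i - dogd_xbar N W eta (grad_oracle \<omega>) t))\<^sup>2)"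
  using square_integrable_diff[OF square_integrable_dogd_x square_integrable_dogd_xbar]
  by (intro Bochner_Integration.integrable_sum) (simp add: square_integrable_def)

lemma integrable_grad_inner_consensus_error:
  "integrable M (\<lambda>\<omega>. \<Sum>i<N. g (xi t i \<omega>) (dogd_xbar N W eta (grad_oracle \<omega>) t)
      \<bullet> (dogd_x N W eta (grad_oracle \<omega>) t i - dogd_xbar N W eta (grad_oracle \<omega>) t))"
  by (intro Bochner_Integration.integrable_sum integrable_inner_square_integrable square_integrable_grad
      square_integrable_diff square_integrable_dogd_x square_integrable_dogd_xbar)

lemma integral_grad_inner_consensus_error_eq_zero:
  "(\<integral>\<omega>. (\<Sum>i<N. g (xi t i \<omega>) (dogd_xbar N W eta (grad_oracle \<omega>) t)
      \<bullet> (dogd_x N W eta (grad_oracle \<omega>) t i - dogd_xbar N W eta (grad_oracle \<omega>) t)) \<partial>M) = 0"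
proof -
  define \<Phi> where "\<Phi> i v = dogd_x N W eta (history_oracle t v) t i" for i v
  define \<Psi> where "\<Psi> v = dogd_xbar N W eta (history_oracle t v) t" for v
  have x_past: "dogd_x N W eta (grad_oracle \<omega>) t i = \<Phi> i (past t \<omega>)" for \<omega> i
    unfolding \<Phi>_def by (rule dogd_x_cong) (simp add: grad_oracle_eq_history_oracle)
  have xbar_past: "dogd_xbar N W eta (grad_oracle \<omega>) t = \<Psi> (past t \<omega>)" for \<omega>
    unfolding \<Psi>_def by (rule dogd_xbar_cong) (simp add: grad_oracle_eq_history_oracle)
  have [measurable]: "\<Phi> i \<in> borel_measurable (history t)" "\<Psi> \<in> borel_measurable (history t)" for i
    unfolding \<Phi>_def \<Psi>_def by (rule measurable_dogd_x_history measurable_dogd_xbar_history)+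
  have sq: "square_integrable M (\<lambda>\<omega>. \<Psi> (past t \<omega>))"
    "square_integrable M (\<lambda>\<omega>. \<Phi> i (past t \<omega>) - \<Psi> (past t \<omega>))" for i
    using square_integrable_dogd_xbar[of N W eta t]
      square_integrable_diff[OF square_integrable_dogd_x square_integrable_dogd_xbar, of N W eta t i N W eta t]
    by (simp_all add: x_past xbar_past)
  note frozen = integral_grad_inner_past[of \<Psi> t "\<lambda>v. \<Phi> i v - \<Psi> v" for i, OF _ _ sq]
  have "(\<integral>\<omega>. (\<Sum>i<N. g (xi t i \<omega>) (\<Psi> (past t \<omega>)) \<bullet> (\<Phi> i (past t \<omega>) - \<Psi> (past t \<omega>))) \<partial>M)
      = (\<Sum>i<N. \<integral>\<omega>. g (xi t i \<omega>) (\<Psi> (past t \<omega>)) \<bullet> (\<Phi> i (past t \<omega>) - \<Psi> (past t \<omega>)) \<partial>M)"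
    using sq by (intro Bochner_Integration.integral_sum integrable_inner_square_integrable square_integrable_grad)
  also have "\<dots> = (\<Sum>i<N. \<integral>\<omega>. expected_grad (\<Psi> (past t \<omega>)) \<bullet> (\<Phi> i (past t \<omega>) - \<Psi> (past t \<omega>)) \<partial>M)"
    using frozen(2) by simp
  also have "\<dots> = (\<integral>\<omega>. expected_grad (\<Psi> (past t \<omega>)) \<bullet> (\<Sum>i<N. \<Phi> i (past t \<omega>) - \<Psi> (past t \<omega>)) \<partial>M)"
    using frozen(1) by (simp add: inner_sum_right Bochner_Integration.integral_sum)
  also have "\<dots> = 0"
    by (simp add: \<Phi>_def \<Psi>_def sum_dogd_x_minus_xbar)
  finally show ?thesis
    by (simp add: x_past xbar_past)
qed

end

theorem lemma1:
  fixes N T :: nat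
    and W :: "nat \<Rightarrow> nat \<Rightarrow> real"
    and E :: "nat \<Rightarrow> nat \<Rightarrow> bool"
    and eta L D :: real
    and M :: "'w measure"
    and S :: "'s measure"
    and P :: "'s measure"
    and xi :: "nat \<Rightarrow> nat \<Rightarrow> 'w \<Rightarrow> 's"
    and loss :: "'s \<Rightarrow> 'a::euclidean_space \<Rightarrow> real"
    and g :: "'s \<Rightarrow> 'a \<Rightarrow> 'a"
  assumes N_pos: "N \<ge> 1"
    and E_sym: "\<And>i j. E i j \<Longrightarrow> E j i"
    and E_irrefl: "\<And>i. \<not> E i i"
    and connected: "\<And>i j. i < N \<Longrightarrow> j < N \<Longrightarrow> (\<lambda>a b. a < N \<and> b < N \<and> E a b)\<^sup>*\<^sup>* i j"
    and W_edge: "\<And>i j. i < N \<Longrightarrow> j < N \<Longrightarrow> E i j \<Longrightarrow> W i j > 0"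
    and W_diag: "\<And>i. i < N \<Longrightarrow> W i i > 0"
    and W_zero: "\<And>i j. i < N \<Longrightarrow> j < N \<Longrightarrow> i \<noteq> j \<Longrightarrow> \<not> E i j \<Longrightarrow> W i j = 0"
    and W_nonneg: "\<And>i j. i < N \<Longrightarrow> j < N \<Longrightarrow> W i j \<ge> 0"
    and W_row: "\<And>i. i < N \<Longrightarrow> (\<Sum>j<N. W i j) = 1"
    and W_col: "\<And>j. j < N \<Longrightarrow> (\<Sum>i<N. W i j) = 1"
    and eta_pos: "eta > 0"
    and prob: "prob_space M"
    and xi_meas: "\<And>t i. xi t i \<in> measurable M S"
    and xi_indep: "prob_space.indep_vars M (\<lambda>_. S) (\<lambda>(t, i). xi t i) UNIV"
    and xi_distr: "\<And>t i. distr M S (xi t i) = P"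
    and loss_meas: "(\<lambda>(s, x). loss s x) \<in> borel_measurable (S \<Otimes>\<^sub>M borel)"
    and g_meas: "(\<lambda>(s, x). g s x) \<in> measurable (S \<Otimes>\<^sub>M borel) borel"
    and grad: "\<And>s x. s \<in> space S \<Longrightarrow> (loss s has_derivative (\<lambda>h. g s x \<bullet> h)) (at x)"
    and convex: "\<And>s. s \<in> space S \<Longrightarrow> convex_on UNIV (loss s)"
    and smooth: "\<And>s x y. s \<in> space S \<Longrightarrow> norm (g s x - g s y) \<le> L * norm (x - y)"
    and moment: "\<And>x. (\<integral>\<^sup>+ s. ennreal ((norm (g s x))\<^sup>2) \<partial>P) \<le> ennreal D"
  shows "(\<integral>\<omega>. (\<Sum>i<N. \<Sum>t\<in>{1..T}. loss (xi t i \<omega>) (dogd_x N W eta (\<lambda>t i. g (xi t i \<omega>)) t i))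
                 - (\<Sum>i<N. \<Sum>t\<in>{1..T}. loss (xi t i \<omega>) (dogd_xbar N W eta (\<lambda>t i. g (xi t i \<omega>)) t)) \<partial>M)
         \<le> 2 * L * (\<Sum>t\<in>{1..T}. \<integral>\<omega>. (\<Sum>i<N. (norm (dogd_x N W eta (\<lambda>t i. g (xi t i \<omega>)) t i
                                   - dogd_xbar N W eta (\<lambda>t i. g (xi t i \<omega>)) t))\<^sup>2) \<partial>M)"
proof -
  interpret stochastic_gradients M S P xi g L D
    using prob xi_meas xi_indep xi_distr g_meas smooth moment
    by (simp add: stochastic_gradients_def stochastic_gradients_axioms_def)
  define x where "x t i \<omega> = dogd_x N W eta (grad_oracle \<omega>) t i" for t i \<omega>
  define xbar where "xbar t \<omega> = dogd_xbar N W eta (grad_oracle \<omega>) t" for t \<omega>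
  define err where "err t \<omega> = (\<Sum>i<N. (norm (x t i \<omega> - xbar t \<omega>))\<^sup>2)" for t \<omega>
  define cross where "cross t \<omega> = (\<Sum>i<N. g (xi t i \<omega>) (xbar t \<omega>) \<bullet> (x t i \<omega> - xbar t \<omega>))" for t \<omega>
  have int_err: "integrable M (err t)" and int_cross: "integrable M (cross t)" for t
    unfolding err_def cross_def x_def xbar_def
    by (rule integrable_sum_sq_consensus_error integrable_grad_inner_consensus_error)+
  have cross_zero: "integral\<^sup>L M (cross t) = 0" for t
    unfolding cross_def x_def xbar_def by (rule integral_grad_inner_consensus_error_eq_zero)
  have err_nonneg: "0 \<le> (\<Sum>t\<in>{1..T}. integral\<^sup>L M (err t))"
    unfolding err_def by (intro sum_nonneg Bochner_Integration.integral_nonneg sum_nonneg) simp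
  have integral_bound:
    "(\<integral>\<omega>. (\<Sum>t\<in>{1..T}. L * err t \<omega> + cross t \<omega>) \<partial>M) = L * (\<Sum>t\<in>{1..T}. integral\<^sup>L M (err t))"
    using int_err int_cross by (simp add: Bochner_Integration.integral_sum cross_zero sum_distrib_left)
  have "(\<integral>\<omega>. (\<Sum>i<N. \<Sum>t\<in>{1..T}. loss (xi t i \<omega>) (x t i \<omega>))
                 - (\<Sum>i<N. \<Sum>t\<in>{1..T}. loss (xi t i \<omega>) (xbar t \<omega>)) \<partial>M)
      \<le> (\<integral>\<omega>. (\<Sum>t\<in>{1..T}. L * err t \<omega> + cross t \<omega>) \<partial>M)"
  proof (rule integral_le_integral_upper_bound)
    fix \<omega> assume "\<omega> \<in> space M"
    then have "xi t i \<omega> \<in> space S" for t i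
      by (rule measurable_space[OF xi_meas])
    then show "(\<Sum>i<N. \<Sum>t\<in>{1..T}. loss (xi t i \<omega>) (x t i \<omega>)) - (\<Sum>i<N. \<Sum>t\<in>{1..T}. loss (xi t i \<omega>) (xbar t \<omega>))
        \<le> (\<Sum>t\<in>{1..T}. L * err t \<omega> + cross t \<omega>)"
      unfolding err_def cross_def by (intro sum_convex_smooth_diff_le convex grad smooth)
  qed (use int_err int_cross in simp, unfold integral_bound, use err_nonneg L_nonneg in simp)
  also have "\<dots> \<le> 2 * L * (\<Sum>t\<in>{1..T}. integral\<^sup>L M (err t))"
    unfolding integral_bound using err_nonneg L_nonneg by (simp add: mult_right_mono)
  finally show ?thesis
    unfolding x_def xbar_def err_def .
qed

end
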